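(* There exists $\rho>0$ such that, for every tiling $T\in\Omega$: (i) for every decorated face $f=(p,q)$ of $T$ (of any dimension), $\cap p + B(0,\rho)\subset \cup q$; (ii) for any two decorated faces $f=(p,q)$ and $f'=(p',q')$ of $T$, if $\operatorname{dist}(\cap p,\cap p')<\rho$ then $f$ and $f'$ intersect.
   Context: Setting. A tile is a compact subset of $\mathbb{R}^d$ homeomorphic to a closed ball which is a finite CW-complex (tiles may carry labels). A partial tiling is a set of tiles with pairwise disjoint interiors, a patch is a finite partial tiling, a tiling is a partial tiling covering $\mathbb{R}^d$; in any partial tiling the intersection of any collection of tiles is empty or a subcomplex of each of them. $\Omega$ denotes the tiling space of a primitive, strongly aperiodic substitution with finite local complexity (finitely many patches of each given size up to translation) on a finite prototile set. For a patch $p$ write $\cap p$ for the intersection of its tiles and $\cup p$ for the union of its tiles; $B(0,\rho)$ is the open ball of radius $\rho$. Faces. Let $T\in\Omega$. A $j$-dimensional (decorated) face of $T$ is a pair $f=(p,q)$ of patches of $T$ such that: $\cap p$ is a $j$-dimensional closed CW-complex; $p$ is maximal, i.e. no tile $t'\in T$ outside $p$ contains $\cap p$; and $q$ is the set of all tiles of $T$ which intersect $\cap p$. Two faces $f=(p,q)$, $f'=(p',q')$ intersect if $p\subset q'$, $p'\subset q$, and $q\cup q'$ is a well-defined patch (the collars match). *)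

theory Defs
  imports "HOL-Analysis.Analysis"
begin

text \<open>A cell is a pair (S, phi): S is a linear subspace (its dimension is the
dimension of the cell), the closed n-ball is cball 0 1 inter S, and phi is the
characteristic map.\<close>

type_synonym 'a cell = "'a set \<times> ('a \<Rightarrow> 'a)"

definition closed_cell :: "'a::euclidean_space cell \<Rightarrow> 'a set" where
  "closed_cell c = snd c ` (cball 0 1 \<inter> fst c)"

definition open_cell :: "'a::euclidean_space cell \<Rightarrow> 'a set" where
  "open_cell c = snd c ` (ball 0 1 \<inter> fst c)"

definition cell_dim :: "'a::euclidean_space cell \<Rightarrow> nat" where
  "cell_dim c = dim (fst c)"

definition is_cw_complex :: "'a::euclidean_space set \<Rightarrow> 'a cell set \<Rightarrow> bool" where
  "is_cw_complex X C \<longleftrightarrow>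
     finite C \<and>
     (\<forall>c\<in>C. subspace (fst c) \<and>
        continuous_on (cball 0 1 \<inter> fst c) (snd c) \<and>
        (\<exists>g. homeomorphism (ball 0 1 \<inter> fst c) (open_cell c) (snd c) g) \<and>
        snd c ` (sphere 0 1 \<inter> fst c) \<subseteq>
           \<Union>(open_cell ` {c'\<in>C. cell_dim c' < cell_dim c})) \<and>
     (\<forall>c\<in>C. \<forall>c'\<in>C. c \<noteq> c' \<longrightarrow> open_cell c \<inter> open_cell c' = {}) \<and>
     X = \<Union>(open_cell ` C)"

record ('a, 'l) tile =
  supp :: "'a set"
  lab :: 'l
  cells :: "('a set \<times> ('a \<Rightarrow> 'a)) set"

definition is_tile :: "('a::euclidean_space, 'l) tile \<Rightarrow> bool" where
  "is_tile t \<longleftrightarrow> compact (supp t) \<and> supp t homeomorphic (cball (0::'a) 1) \<and>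
     is_cw_complex (supp t) (cells t)"

definition is_subcomplex :: "('a::euclidean_space, 'l) tile \<Rightarrow> 'a set \<Rightarrow> bool" where
  "is_subcomplex t Y \<longleftrightarrow> (\<exists>C'\<subseteq>cells t. Y = \<Union>(open_cell ` C') \<and> (\<forall>c\<in>C'. closed_cell c \<subseteq> Y))"

definition is_subcomplex_dim :: "('a::euclidean_space, 'l) tile \<Rightarrow> 'a set \<Rightarrow> nat \<Rightarrow> bool" where
  "is_subcomplex_dim t Y j \<longleftrightarrow> (\<exists>C'\<subseteq>cells t. C' \<noteq> {} \<and> Y = \<Union>(open_cell ` C') \<and>
      (\<forall>c\<in>C'. closed_cell c \<subseteq> Y) \<and> j = Max (cell_dim ` C'))"

definition translate_tile :: "'a::euclidean_space \<Rightarrow> ('a, 'l) tile \<Rightarrow> ('a, 'l) tile" where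
  "translate_tile x t = \<lparr> supp = (\<lambda>y. y + x) ` supp t, lab = lab t,
      cells = (\<lambda>(S, \<phi>). (S, \<lambda>y. \<phi> y + x)) ` cells t \<rparr>"

definition translate_patch :: "'a::euclidean_space \<Rightarrow> ('a, 'l) tile set \<Rightarrow> ('a, 'l) tile set" where
  "translate_patch x Q = translate_tile x ` Q"

text \<open>Partial tiling, including the standing assumption that the intersection of
any collection of tiles is empty or a subcomplex of each of them.\<close>
definition partial_tiling :: "('a::euclidean_space, 'l) tile set \<Rightarrow> bool" where
  "partial_tiling T \<longleftrightarrow> (\<forall>t\<in>T. is_tile t) \<and>
     (\<forall>t\<in>T. \<forall>t'\<in>T. t \<noteq> t' \<longrightarrow> interior (supp t) \<inter> interior (supp t') = {}) \<and>
     (\<forall>P\<subseteq>T. P \<noteq> {} \<longrightarrow> \<Inter>(supp ` P) = {} \<or> (\<forall>t\<in>P. is_subcomplex t (\<Inter>(supp ` P))))"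

definition is_patch :: "('a::euclidean_space, 'l) tile set \<Rightarrow> bool" where
  "is_patch Q \<longleftrightarrow> finite Q \<and> partial_tiling Q"

definition is_tiling :: "('a::euclidean_space, 'l) tile set \<Rightarrow> bool" where
  "is_tiling T \<longleftrightarrow> partial_tiling T \<and> \<Union>(supp ` T) = UNIV"

text \<open>Expanding: some power of L strictly expands norms uniformly
(equivalent to all eigenvalues having modulus > 1).\<close>
definition is_substitution ::
  "('a::euclidean_space, 'l) tile set \<Rightarrow> ('a \<Rightarrow> 'a) \<Rightarrow> (('a, 'l) tile \<Rightarrow> ('a, 'l) tile set) \<Rightarrow> bool" where
  "is_substitution P L \<sigma> \<longleftrightarrow> finite P \<and> P \<noteq> {} \<and> (\<forall>s\<in>P. is_tile s) \<and>
     linear L \<and> (\<exists>k>0. \<exists>c>1. \<forall>x. norm ((L ^^ k) x) \<ge> c * norm x) \<and>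
     (\<forall>s\<in>P. is_patch (\<sigma> s) \<and> (\<forall>u\<in>\<sigma> s. \<exists>s'\<in>P. \<exists>x. u = translate_tile x s') \<and>
        \<Union>(supp ` \<sigma> s) = L ` supp s) \<and>
     (\<forall>s\<in>P. \<forall>x. \<sigma> (translate_tile x s) = translate_patch (L x) (\<sigma> s))"

definition subst_iter :: "(('a, 'l) tile \<Rightarrow> ('a, 'l) tile set) \<Rightarrow> nat \<Rightarrow> ('a, 'l) tile set \<Rightarrow> ('a, 'l) tile set" where
  "subst_iter \<sigma> n Q = ((\<lambda>Q. \<Union>(\<sigma> ` Q)) ^^ n) Q"

definition tiling_space ::
  "('a::euclidean_space, 'l) tile set \<Rightarrow> (('a, 'l) tile \<Rightarrow> ('a, 'l) tile set) \<Rightarrow> ('a, 'l) tile set set" where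
  "tiling_space P \<sigma> = {T. is_tiling T \<and> (\<forall>t\<in>T. \<exists>s\<in>P. \<exists>x. t = translate_tile x s) \<and>
     (\<forall>Q\<subseteq>T. finite Q \<longrightarrow> (\<exists>n s x. s \<in> P \<and> translate_patch x Q \<subseteq> subst_iter \<sigma> n {s}))}"

definition primitive_subst ::
  "('a::euclidean_space, 'l) tile set \<Rightarrow> (('a, 'l) tile \<Rightarrow> ('a, 'l) tile set) \<Rightarrow> bool" where
  "primitive_subst P \<sigma> \<longleftrightarrow> (\<exists>n>0. \<forall>s\<in>P. \<forall>t\<in>P. \<exists>x. translate_tile x t \<in> subst_iter \<sigma> n {s})"

definition strongly_aperiodic :: "('a::euclidean_space, 'l) tile set set \<Rightarrow> bool" where
  "strongly_aperiodic \<Omega> \<longleftrightarrow> (\<forall>T\<in>\<Omega>. \<forall>x. translate_patch x T = T \<longrightarrow> x = 0)"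

definition FLC :: "('a::euclidean_space, 'l) tile set set \<Rightarrow> bool" where
  "FLC \<Omega> \<longleftrightarrow> (\<forall>R>0. \<exists>F. finite F \<and> (\<forall>T\<in>\<Omega>. \<forall>Q\<subseteq>T.
      finite Q \<and> (\<exists>x. \<Union>(supp ` Q) \<subseteq> cball x R) \<longrightarrow> (\<exists>Q0\<in>F. \<exists>y. Q = translate_patch y Q0)))"

definition is_face :: "('a::euclidean_space, 'l) tile set \<Rightarrow> nat \<Rightarrow> ('a, 'l) tile set \<Rightarrow> ('a, 'l) tile set \<Rightarrow> bool" where
  "is_face T j p q \<longleftrightarrow> is_patch p \<and> p \<subseteq> T \<and> is_patch q \<and> q \<subseteq> T \<and> p \<noteq> {} \<and>
     (\<forall>t\<in>p. is_subcomplex_dim t (\<Inter>(supp ` p)) j) \<and>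
     (\<forall>t\<in>T. \<Inter>(supp ` p) \<subseteq> supp t \<longrightarrow> t \<in> p) \<and>
     q = {t\<in>T. supp t \<inter> \<Inter>(supp ` p) \<noteq> {}}"

definition faces_intersect :: "('a::euclidean_space, 'l) tile set \<Rightarrow> ('a, 'l) tile set \<Rightarrow> ('a, 'l) tile set \<Rightarrow> ('a, 'l) tile set \<Rightarrow> bool" where
  "faces_intersect p q p' q' \<longleftrightarrow> p \<subseteq> q' \<and> p' \<subseteq> q \<and> is_patch (q \<union> q')"

end

theory Submission
  imports Defs
begin

text \<open>Call \<open>\<Inter>A\<close> the core of a finite subpatch \<open>A\<close> of a tiling \<open>T \<in> \<Omega>\<close>. Two disjoint
nonempty cores are compact, hence at positive distance. If that distance is below 1, the
patch \<open>A \<union> B\<close> fits in a ball whose radius depends only on the prototiles, so by finite local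
complexity it is a translate of one of finitely many patches; as the distance of the cores
is translation invariant, it takes only finitely many values. Their minimum (together with 1)
is a uniform \<open>\<rho> > 0\<close> separating disjoint cores. Both claims follow: a point within \<open>\<rho>\<close> of the
face core \<open>\<Inter>p\<close> lies in a tile whose core meets \<open>\<Inter>p\<close>, i.e. a tile of \<open>q\<close>; and the cores
of two faces at distance \<open>< \<rho>\<close> must meet, which gives \<open>p \<subseteq> q'\<close> and \<open>p' \<subseteq> q\<close>.\<close>

lemma setdist_translation_le:
  fixes S T :: "'a::real_normed_vector set"
  shows "setdist S T \<le> setdist ((\<lambda>z. z + y) ` S) ((\<lambda>z. z + y) ` T)"
proof (cases "S = {} \<or> T = {}")
  case False
  show ?thesis
  proof (rule le_setdistI)
    fix a b assume "a \<in> (\<lambda>z. z + y) ` S" "b \<in> (\<lambda>z. z + y) ` T"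
    then obtain a0 b0 where "a0 \<in> S" "b0 \<in> T" "a = a0 + y" "b = b0 + y" by auto
    then show "setdist S T \<le> dist a b"
      using setdist_le_dist[of a0 S b0 T] by (simp add: dist_norm)
  qed (use False in auto)
qed auto

lemma setdist_translation:
  fixes S T :: "'a::real_normed_vector set"
  shows "setdist ((\<lambda>z. z + y) ` S) ((\<lambda>z. z + y) ` T) = setdist S T"
  using setdist_translation_le[of S T y]
    setdist_translation_le[of "(\<lambda>z. z + y) ` S" "(\<lambda>z. z + y) ` T" "- y"]
  by (simp add: image_image)

lemma supp_translate_tile: "supp (translate_tile y t) = (\<lambda>z. z + y) ` supp t"
  by (simp add: translate_tile_def)

lemma translate_tile_neg_cancel:
  "translate_tile (- y) (translate_tile y t) = (t :: ('a::euclidean_space, 'l) tile)"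
proof -
  have "(\<lambda>(S, \<phi>). (S, \<lambda>z. \<phi> z + - y)) ` (\<lambda>(S, \<phi>). (S, \<lambda>z. \<phi> z + y)) ` cells t = cells t"
    by (force simp: image_image split_def)
  then show ?thesis
    by (simp add: translate_tile_def image_image)
qed

lemma inj_translate_tile: "inj (translate_tile (y::'a::euclidean_space) :: ('a, 'l) tile \<Rightarrow> _)"
  by (metis injI translate_tile_neg_cancel)

lemma Inter_supp_translate_patch:
  assumes "Q \<noteq> {}"
  shows "\<Inter>(supp ` translate_patch y Q) = (\<lambda>z. z + y) ` \<Inter>(supp ` Q)"
proof -
  obtain t where "t \<in> Q" using assms by auto
  then have "(\<lambda>z. z + y) ` \<Inter>(supp ` Q) = (\<Inter>t\<in>Q. (\<lambda>z. z + y) ` supp t)"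
    by (intro image_INT[where C = UNIV]) auto
  then show ?thesis
    by (simp add: translate_patch_def supp_translate_tile image_image)
qed

lemma tiling_space_partial_tiling: "T \<in> tiling_space P \<sigma> \<Longrightarrow> partial_tiling T"
  by (simp add: tiling_space_def is_tiling_def)

lemma tiling_space_covers: "T \<in> tiling_space P \<sigma> \<Longrightarrow> \<Union>(supp ` T) = UNIV"
  by (simp add: tiling_space_def is_tiling_def)

lemma partial_tiling_subset: "partial_tiling T \<Longrightarrow> Q \<subseteq> T \<Longrightarrow> partial_tiling Q"
  unfolding partial_tiling_def by (simp add: subset_iff)

lemma partial_tiling_is_tile: "partial_tiling T \<Longrightarrow> t \<in> T \<Longrightarrow> is_tile t"
  unfolding partial_tiling_def by (elim conjE) (rule bspec)

lemma partial_tiling_compact_core: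
  assumes "partial_tiling T" "A \<subseteq> T" "A \<noteq> {}"
  shows "compact (\<Inter>(supp ` A))"
  using assms partial_tiling_is_tile by (intro compact_Inter) (auto simp: is_tile_def)

lemma tiling_space_diameter_bound:
  fixes P :: "('a::euclidean_space, 'l) tile set"
  assumes "is_substitution P L \<sigma>"
  obtains d where "d \<ge> 0"
    "\<And>T t u v. T \<in> tiling_space P \<sigma> \<Longrightarrow> t \<in> T \<Longrightarrow> u \<in> supp t \<Longrightarrow> v \<in> supp t \<Longrightarrow> dist u v \<le> d"
proof -
  have "bounded (\<Union>(supp ` P))"
    using assms by (auto intro!: bounded_Union compact_imp_bounded
        simp: is_substitution_def is_tile_def)
  then obtain D where D: "\<And>s z. s \<in> P \<Longrightarrow> z \<in> supp s \<Longrightarrow> norm z \<le> D"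
    by (auto simp: bounded_iff)
  have "dist u v \<le> 2 * max D 0"
    if T: "T \<in> tiling_space P \<sigma>" "t \<in> T" and uv: "u \<in> supp t" "v \<in> supp t" for T t u v
  proof -
    obtain s x where "s \<in> P" "t = translate_tile x s"
      using T unfolding tiling_space_def by blast
    then obtain u0 v0 where "u0 \<in> supp s" "v0 \<in> supp s" "u = u0 + x" "v = v0 + x"
      using uv by (auto simp: supp_translate_tile)
    then have "dist u v \<le> norm u0 + norm v0"
      by (simp add: dist_norm norm_triangle_ineq4)
    also have "\<dots> \<le> 2 * max D 0"
      using D[OF \<open>s \<in> P\<close> \<open>u0 \<in> supp s\<close>] D[OF \<open>s \<in> P\<close> \<open>v0 \<in> supp s\<close>] by linarith
    finally show ?thesis .
  qed
  then show ?thesis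
    using that[of "2 * max D 0"] by simp
qed

definition cores_separated :: "('a::euclidean_space, 'l) tile set \<Rightarrow> real \<Rightarrow> bool" where
  "cores_separated T \<rho> \<longleftrightarrow> (\<forall>A B. A \<subseteq> T \<longrightarrow> B \<subseteq> T \<longrightarrow> finite A \<longrightarrow> finite B \<longrightarrow>
     \<Inter>(supp ` A) \<noteq> {} \<longrightarrow> \<Inter>(supp ` B) \<noteq> {} \<longrightarrow> \<Inter>(supp ` A) \<inter> \<Inter>(supp ` B) = {} \<longrightarrow>
     \<rho> \<le> setdist (\<Inter>(supp ` A)) (\<Inter>(supp ` B)))"

lemma cores_separatedD:
  assumes "cores_separated T \<rho>" "A \<subseteq> T" "B \<subseteq> T" "finite A" "finite B"
    "\<Inter>(supp ` A) \<noteq> {}" "\<Inter>(supp ` B) \<noteq> {}" "\<Inter>(supp ` A) \<inter> \<Inter>(supp ` B) = {}"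
  shows "\<rho> \<le> setdist (\<Inter>(supp ` A)) (\<Inter>(supp ` B))"
  using assms unfolding cores_separated_def by blast

lemma FLC_finitely_many_core_distances:
  fixes \<Omega> :: "('a::euclidean_space, 'l) tile set set"
  assumes "FLC \<Omega>" "R > 0"
  obtains S where "finite S"
    "\<And>T A B x. T \<in> \<Omega> \<Longrightarrow> A \<subseteq> T \<Longrightarrow> B \<subseteq> T \<Longrightarrow> finite A \<Longrightarrow> finite B \<Longrightarrow>
       A \<noteq> {} \<Longrightarrow> B \<noteq> {} \<Longrightarrow> \<Union>(supp ` (A \<union> B)) \<subseteq> cball x R \<Longrightarrow>
       setdist (\<Inter>(supp ` A)) (\<Inter>(supp ` B)) \<in> S"
proof -
  obtain F where "finite F" and F: "\<And>T Q. T \<in> \<Omega> \<Longrightarrow> Q \<subseteq> T \<Longrightarrow> finite Q \<Longrightarrow>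
      \<exists>x. \<Union>(supp ` Q) \<subseteq> cball x R \<Longrightarrow> \<exists>Q0\<in>F. \<exists>y. Q = translate_patch y Q0"
    using assms unfolding FLC_def by meson
  define S where "S = (\<lambda>(A0, B0). setdist (\<Inter>(supp ` A0)) (\<Inter>(supp ` B0))) `
      (\<Union>Q0\<in>{Q0\<in>F. finite Q0}. Pow Q0 \<times> Pow Q0)"
  have "finite S"
    unfolding S_def using \<open>finite F\<close> by (intro finite_imageI finite_UN_I) auto
  moreover have "setdist (\<Inter>(supp ` A)) (\<Inter>(supp ` B)) \<in> S"
    if patches: "T \<in> \<Omega>" "A \<subseteq> T" "B \<subseteq> T" "finite A" "finite B"
      and "A \<noteq> {}" "B \<noteq> {}" and small: "\<Union>(supp ` (A \<union> B)) \<subseteq> cball x R" for T A B x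
  proof -
    obtain Q0 y where "Q0 \<in> F" and AB: "A \<union> B = translate_patch y Q0"
      using F[of T "A \<union> B"] patches small by auto
    have "finite Q0"
      using AB \<open>finite A\<close> \<open>finite B\<close> inj_translate_tile[of y]
      by (metis finite_Un finite_imageD inj_on_subset subset_UNIV translate_patch_def)
    define A0 where "A0 = {t\<in>Q0. translate_tile y t \<in> A}"
    define B0 where "B0 = {t\<in>Q0. translate_tile y t \<in> B}"
    have A: "A = translate_patch y A0" and B: "B = translate_patch y B0"
      using AB unfolding A0_def B0_def translate_patch_def by auto
    then have "A0 \<noteq> {}" "B0 \<noteq> {}"
      using \<open>A \<noteq> {}\<close> \<open>B \<noteq> {}\<close> by (auto simp: translate_patch_def)
    then have "setdist (\<Inter>(supp ` A)) (\<Inter>(supp ` B)) = setdist (\<Inter>(supp ` A0)) (\<Inter>(supp ` B0))"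
      by (simp add: A B Inter_supp_translate_patch setdist_translation)
    then show ?thesis
      unfolding S_def using \<open>Q0 \<in> F\<close> \<open>finite Q0\<close>
      by (intro image_eqI[where x = "(A0, B0)"]) (auto simp: A0_def B0_def)
  qed
  ultimately show ?thesis
    using that by blast
qed

lemma close_cores_in_cball:
  assumes diam: "\<And>t u v. t \<in> A \<union> B \<Longrightarrow> u \<in> supp t \<Longrightarrow> v \<in> supp t \<Longrightarrow> dist u v \<le> d"
    and "a \<in> \<Inter>(supp ` A)" "b \<in> \<Inter>(supp ` B)" "dist a b < 1"
  shows "\<Union>(supp ` (A \<union> B)) \<subseteq> cball a (d + 1)"
proof
  fix z assume "z \<in> \<Union>(supp ` (A \<union> B))"
  then obtain t where t: "t \<in> A \<union> B" "z \<in> supp t" by auto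
  show "z \<in> cball a (d + 1)"
  proof (cases "t \<in> A")
    case True
    then show ?thesis
      using diam[OF t(1) _ t(2), of a] assms(2) by auto
  next
    case False
    then have "dist b z \<le> d"
      using diam[OF t(1) _ t(2), of b] assms(3) t(1) by auto
    then show ?thesis
      using dist_triangle[of a z b] assms(4) by simp
  qed
qed

lemma finite_set_positive_lower_bound:
  fixes S :: "real set"
  assumes "finite S"
  obtains \<rho> where "\<rho> > 0" "\<And>x. 0 < x \<Longrightarrow> (x < 1 \<Longrightarrow> x \<in> S) \<Longrightarrow> \<rho> \<le> x"
proof
  define M where "M = insert 1 {s\<in>S. s > 0}"
  have "finite M" using assms by (simp add: M_def)
  then show "Min M > 0" by (simp add: M_def)
  show "Min M \<le> x" if x: "0 < x" "x < 1 \<Longrightarrow> x \<in> S" for x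
  proof (cases "x < 1")
    case True
    then show ?thesis using x \<open>finite M\<close> by (simp add: M_def)
  next
    case False
    then have "Min M \<le> 1" using \<open>finite M\<close> by (simp add: M_def)
    then show ?thesis using False by linarith
  qed
qed

lemma tiling_space_cores_separated:
  fixes P :: "('a::euclidean_space, 'l) tile set"
  assumes sub: "is_substitution P L \<sigma>" and flc: "FLC (tiling_space P \<sigma>)"
  obtains \<rho> where "\<rho> > 0" "\<And>T. T \<in> tiling_space P \<sigma> \<Longrightarrow> cores_separated T \<rho>"
proof -
  obtain d where "d \<ge> 0" and diam: "\<And>T t u v. T \<in> tiling_space P \<sigma> \<Longrightarrow> t \<in> T \<Longrightarrow>
      u \<in> supp t \<Longrightarrow> v \<in> supp t \<Longrightarrow> dist u v \<le> d"
    using tiling_space_diameter_bound[OF sub] by blast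
  obtain S where "finite S" and S: "\<And>T A B x. T \<in> tiling_space P \<sigma> \<Longrightarrow> A \<subseteq> T \<Longrightarrow> B \<subseteq> T \<Longrightarrow>
      finite A \<Longrightarrow> finite B \<Longrightarrow> A \<noteq> {} \<Longrightarrow> B \<noteq> {} \<Longrightarrow> \<Union>(supp ` (A \<union> B)) \<subseteq> cball x (d + 1) \<Longrightarrow>
      setdist (\<Inter>(supp ` A)) (\<Inter>(supp ` B)) \<in> S"
    using FLC_finitely_many_core_distances[OF flc, of "d + 1"] \<open>d \<ge> 0\<close> by auto
  obtain \<rho> where "\<rho> > 0" and \<rho>: "\<And>x. 0 < x \<Longrightarrow> (x < 1 \<Longrightarrow> x \<in> S) \<Longrightarrow> \<rho> \<le> x"
    using finite_set_positive_lower_bound[OF \<open>finite S\<close>] by blast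
  have "cores_separated T \<rho>" if T: "T \<in> tiling_space P \<sigma>" for T
    unfolding cores_separated_def
  proof (intro allI impI)
    fix A B :: "('a, 'l) tile set"
    let ?a = "\<Inter>(supp ` A)" and ?b = "\<Inter>(supp ` B)"
    assume "A \<subseteq> T" "B \<subseteq> T" "finite A" "finite B" "?a \<noteq> {}" "?b \<noteq> {}" "?a \<inter> ?b = {}"
    then have "A \<noteq> {}" "B \<noteq> {}" by auto
    have "compact ?a" "compact ?b"
      using partial_tiling_compact_core tiling_space_partial_tiling[OF T]
        \<open>A \<subseteq> T\<close> \<open>B \<subseteq> T\<close> \<open>A \<noteq> {}\<close> \<open>B \<noteq> {}\<close> by blast+
    then have "0 < setdist ?a ?b"
      using \<open>?a \<noteq> {}\<close> \<open>?b \<noteq> {}\<close> \<open>?a \<inter> ?b = {}\<close>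
      by (simp add: setdist_gt_0_compact_closed compact_imp_closed)
    moreover have "setdist ?a ?b \<in> S" if lt: "setdist ?a ?b < 1"
    proof -
      obtain a b where "a \<in> ?a" "b \<in> ?b" "dist a b < 1"
        using setdist_ltE[OF lt \<open>?a \<noteq> {}\<close> \<open>?b \<noteq> {}\<close>] by blast
      then have "\<Union>(supp ` (A \<union> B)) \<subseteq> cball a (d + 1)"
        using \<open>A \<subseteq> T\<close> \<open>B \<subseteq> T\<close> by (intro close_cores_in_cball[where d = d] diam[OF T]) auto
      then show ?thesis
        using S[OF T] \<open>A \<subseteq> T\<close> \<open>B \<subseteq> T\<close> \<open>finite A\<close> \<open>finite B\<close> \<open>A \<noteq> {}\<close> \<open>B \<noteq> {}\<close> by blast
    qed
    ultimately show "\<rho> \<le> setdist ?a ?b"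
      by (rule \<rho>)
  qed
  then show ?thesis
    using that \<open>\<rho> > 0\<close> by blast
qed

lemma cw_complex_cell_subspace: "is_cw_complex X C \<Longrightarrow> c \<in> C \<Longrightarrow> subspace (fst c)"
  unfolding is_cw_complex_def by (elim conjE) (drule (1) bspec, elim conjE)

lemma is_faceD:
  assumes "is_face T j p q"
  shows "p \<subseteq> T" "finite p" "partial_tiling p" "q \<subseteq> T" "finite q"
    "q = {t\<in>T. supp t \<inter> \<Inter>(supp ` p) \<noteq> {}}"
    "p \<noteq> {}" "\<And>t. t \<in> p \<Longrightarrow> is_subcomplex_dim t (\<Inter>(supp ` p)) j"
  using assms unfolding is_face_def is_patch_def by blast+

lemma face_core_nonempty:
  assumes "is_face T j p q"
  shows "\<Inter>(supp ` p) \<noteq> {}"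
proof -
  obtain t where "t \<in> p"
    using is_faceD(7)[OF assms] by blast
  then have "is_tile t"
    using partial_tiling_is_tile is_faceD(3)[OF assms] by blast
  then have cw: "is_cw_complex (supp t) (cells t)"
    unfolding is_tile_def by blast
  obtain C where C: "C \<subseteq> cells t" "C \<noteq> {}" "\<Inter>(supp ` p) = \<Union>(open_cell ` C)"
    using is_faceD(8)[OF assms \<open>t \<in> p\<close>] unfolding is_subcomplex_dim_def by blast
  then obtain c where "c \<in> C" by blast
  then have "subspace (fst c)"
    using cw_complex_cell_subspace[OF cw] C(1) by blast
  then have "snd c 0 \<in> open_cell c"
    unfolding open_cell_def using subspace_0 by fastforce
  then show ?thesis
    using C(3) \<open>c \<in> C\<close> by blast
qed

lemma face_neighbourhood_covered:
  assumes cover: "\<Union>(supp ` T) = UNIV" and face: "is_face T j p q"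
    and sep: "cores_separated T \<rho>"
  shows "{x + y | x y. x \<in> \<Inter>(supp ` p) \<and> y \<in> ball 0 \<rho>} \<subseteq> \<Union>(supp ` q)"
proof
  fix w assume "w \<in> {x + y | x y. x \<in> \<Inter>(supp ` p) \<and> y \<in> ball 0 \<rho>}"
  then obtain x y where x: "x \<in> \<Inter>(supp ` p)" and "norm y < \<rho>" and w: "w = x + y" by auto
  obtain t where t: "t \<in> T" "w \<in> supp t" using cover by blast
  note q = is_faceD(6)[OF face] and p = is_faceD(1,2)[OF face]
  have "supp t \<inter> \<Inter>(supp ` p) \<noteq> {}"
  proof
    assume "supp t \<inter> \<Inter>(supp ` p) = {}"
    then have "\<rho> \<le> setdist (supp t) (\<Inter>(supp ` p))"
      using cores_separatedD[OF sep, of "{t}" p] t p face_core_nonempty[OF face] by auto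
    also have "\<dots> \<le> dist w x" using t x by (intro setdist_le_dist) auto
    also have "\<dots> < \<rho>" using w \<open>norm y < \<rho>\<close> by (simp add: dist_norm)
    finally show False by simp
  qed
  then show "w \<in> \<Union>(supp ` q)"
    using q t by blast
qed

lemma close_faces_intersect:
  assumes T: "partial_tiling T" and f: "is_face T j p q" and f': "is_face T j' p' q'"
    and sep: "cores_separated T \<rho>"
    and close: "setdist (\<Inter>(supp ` p)) (\<Inter>(supp ` p')) < \<rho>"
  shows "faces_intersect p q p' q'"
proof -
  note q = is_faceD(6,4,5,1,2)[OF f] and q' = is_faceD(6,4,5,1,2)[OF f']
  have "\<Inter>(supp ` p) \<inter> \<Inter>(supp ` p') \<noteq> {}"
    using cores_separatedD[OF sep, of p p'] close q q' face_core_nonempty[OF f] face_core_nonempty[OF f']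
    by linarith
  then have "p \<subseteq> q'" "p' \<subseteq> q"
    using q q' by blast+
  moreover have "is_patch (q \<union> q')"
    using partial_tiling_subset[OF T] q q' by (simp add: is_patch_def)
  ultimately show ?thesis
    unfolding faces_intersect_def by blast
qed

theorem lemma2p25:
  fixes P :: "('a::euclidean_space, 'l) tile set"
    and L :: "'a \<Rightarrow> 'a"
    and \<sigma> :: "('a, 'l) tile \<Rightarrow> ('a, 'l) tile set"
  assumes "is_substitution P L \<sigma>"
    and "primitive_subst P \<sigma>"
    and "strongly_aperiodic (tiling_space P \<sigma>)"
    and "FLC (tiling_space P \<sigma>)"
  shows "\<exists>\<rho>>0. \<forall>T\<in>tiling_space P \<sigma>.
     (\<forall>j p q. is_face T j p q \<longrightarrow>
        {x + y | x y. x \<in> \<Inter>(supp ` p) \<and> y \<in> ball 0 \<rho>} \<subseteq> \<Union>(supp ` q)) \<and>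
     (\<forall>j p q j' p' q'. is_face T j p q \<and> is_face T j' p' q' \<and>
        setdist (\<Inter>(supp ` p)) (\<Inter>(supp ` p')) < \<rho> \<longrightarrow> faces_intersect p q p' q')"
proof -
  obtain \<rho> where "\<rho> > 0" and sep: "\<And>T. T \<in> tiling_space P \<sigma> \<Longrightarrow> cores_separated T \<rho>"
    using tiling_space_cores_separated[OF assms(1,4)] by blast
  show ?thesis
  proof (intro exI[of _ \<rho>] conjI ballI allI impI \<open>\<rho> > 0\<close>)
    fix T j p q assume "T \<in> tiling_space P \<sigma>" "is_face T j p q"
    then show "{x + y | x y. x \<in> \<Inter>(supp ` p) \<and> y \<in> ball 0 \<rho>} \<subseteq> \<Union>(supp ` q)"
      by (intro face_neighbourhood_covered tiling_space_covers sep)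
  next
    fix T j p q j' p' q'
    assume "T \<in> tiling_space P \<sigma>" and
      "is_face T j p q \<and> is_face T j' p' q' \<and> setdist (\<Inter>(supp ` p)) (\<Inter>(supp ` p')) < \<rho>"
    then show "faces_intersect p q p' q'"
      using close_faces_intersect[OF tiling_space_partial_tiling _ _ sep] by blast
  qed
qed

end
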